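(* Let $r\ge3$ be an integer, let $\mathscr C$ be a class of graphs with sub-exponential expansion, and let $g$ be an integer such that every graph in $\mathscr C$ with girth at least $g$ is $(r+1)$-path degenerate. Then every graph $G\in\mathscr C$ with maximum degree $\Delta\ge3$ and $\mathrm{girth}(G)\ge g$ that is not a forest satisfies $a'_r(G)=\max\{\Delta,r\}$.
   Context: Graphs are finite and simple; the girth is the length of a shortest cycle. For an integer $r\ge3$, $a'_r(G)$ is the minimum number of colors in a proper edge coloring of $G$ such that every cycle $C$ of $G$ receives at least $\min\{|C|,r\}$ distinct colors. A strict ear of a graph $G$ is a path of $G$ whose internal vertices all have degree $2$ in $G$ and whose two endpoints are distinct. For an integer $p\ge1$, a $p$-reduction of $G$ is the deletion of either an isolated vertex, or a vertex of degree $1$, or the internal vertices of a strict ear of $G$ of length at least $p$. A graph is $p$-path degenerate if it can be reduced to the empty graph by a sequence of $p$-reductions. A class $\mathscr C$ has sub-exponential expansion if $\sup\{\nabla_r(G):G\in\mathscr C\}=2^{o(r)}$, where $\nabla_r(G)$ is the maximum of $|E(H)|/|V(H)|$ over nonempty shallow minors $H$ of $G$ at depth $r$ (minors obtained by contracting vertex-disjoint subgraphs of radius at most $r$ and deleting vertices and edges). *)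

theory Defs
  imports Complex_Main "HOL-Library.Extended_Real"
begin

definition graph :: "'a set \<Rightarrow> 'a set set \<Rightarrow> bool" where
  "graph V E \<longleftrightarrow> finite V \<and> (\<forall>e\<in>E. \<exists>u v. u \<noteq> v \<and> e = {u, v} \<and> u \<in> V \<and> v \<in> V)"

definition degree :: "'a set set \<Rightarrow> 'a \<Rightarrow> nat" where
  "degree E v = card {e\<in>E. v \<in> e}"

definition max_degree :: "'a set \<Rightarrow> 'a set set \<Rightarrow> nat" where
  "max_degree V E = Max (degree E ` V)"

definition is_path :: "'a set \<Rightarrow> 'a set set \<Rightarrow> 'a list \<Rightarrow> bool" where
  "is_path V E xs \<longleftrightarrow> xs \<noteq> [] \<and> distinct xs \<and> set xs \<subseteq> V \<and>
     (\<forall>i. Suc i < length xs \<longrightarrow> {xs ! i, xs ! Suc i} \<in> E)"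

definition is_cycle :: "'a set \<Rightarrow> 'a set set \<Rightarrow> 'a list \<Rightarrow> bool" where
  "is_cycle V E xs \<longleftrightarrow> length xs \<ge> 3 \<and> distinct xs \<and> set xs \<subseteq> V \<and>
     (\<forall>i < length xs. {xs ! i, xs ! ((i + 1) mod length xs)} \<in> E)"

definition cycle_edges :: "'a list \<Rightarrow> 'a set set" where
  "cycle_edges xs = {{xs ! i, xs ! ((i + 1) mod length xs)} | i. i < length xs}"

text \<open>girth(G) \<ge> g: every cycle has length at least g (forests have infinite girth).\<close>
definition girth_ge :: "'a set \<Rightarrow> 'a set set \<Rightarrow> int \<Rightarrow> bool" where
  "girth_ge V E g \<longleftrightarrow> (\<forall>xs. is_cycle V E xs \<longrightarrow> int (length xs) \<ge> g)"

definition forest :: "'a set \<Rightarrow> 'a set set \<Rightarrow> bool" where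
  "forest V E \<longleftrightarrow> \<not> (\<exists>xs. is_cycle V E xs)"

definition proper_edge_col :: "'a set set \<Rightarrow> ('a set \<Rightarrow> nat) \<Rightarrow> bool" where
  "proper_edge_col E c \<longleftrightarrow> (\<forall>e\<in>E. \<forall>f\<in>E. e \<noteq> f \<and> e \<inter> f \<noteq> {} \<longrightarrow> c e \<noteq> c f)"

definition r_acyclic_col :: "nat \<Rightarrow> 'a set \<Rightarrow> 'a set set \<Rightarrow> ('a set \<Rightarrow> nat) \<Rightarrow> bool" where
  "r_acyclic_col r V E c \<longleftrightarrow> proper_edge_col E c \<and>
     (\<forall>xs. is_cycle V E xs \<longrightarrow> card (c ` cycle_edges xs) \<ge> min (length xs) r)"

definition acyc_index :: "nat \<Rightarrow> 'a set \<Rightarrow> 'a set set \<Rightarrow> nat" where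
  "acyc_index r V E = (LEAST k. \<exists>c. r_acyclic_col r V E c \<and> c ` E \<subseteq> {..<k})"

definition del_V :: "'a set \<Rightarrow> 'a set \<Rightarrow> 'a set" where
  "del_V V S = V - S"
definition del_E :: "'a set set \<Rightarrow> 'a set \<Rightarrow> 'a set set" where
  "del_E E S = {e\<in>E. e \<inter> S = {}}"

text \<open>Strict ear: path whose internal vertices have degree 2 and whose endpoints are distinct;
  its length is the number of edges.\<close>
definition strict_ear :: "'a set \<Rightarrow> 'a set set \<Rightarrow> 'a list \<Rightarrow> bool" where
  "strict_ear V E xs \<longleftrightarrow> is_path V E xs \<and> hd xs \<noteq> last xs \<and>
     (\<forall>v \<in> set (butlast (tl xs)). degree E v = 2)"

definition p_reduction :: "nat \<Rightarrow> 'a set \<Rightarrow> 'a set set \<Rightarrow> 'a set \<Rightarrow> 'a set set \<Rightarrow> bool" where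
  "p_reduction p V E V' E' \<longleftrightarrow>
     (\<exists>v\<in>V. (degree E v = 0 \<or> degree E v = 1) \<and> V' = del_V V {v} \<and> E' = del_E E {v}) \<or>
     (\<exists>xs. strict_ear V E xs \<and> length xs - 1 \<ge> p \<and>
        V' = del_V V (set (butlast (tl xs))) \<and> E' = del_E E (set (butlast (tl xs))))"

inductive path_degenerate :: "nat \<Rightarrow> 'a set \<Rightarrow> 'a set set \<Rightarrow> bool" for p where
  empty: "path_degenerate p {} {}"
| step: "p_reduction p V E V' E' \<Longrightarrow> path_degenerate p V' E' \<Longrightarrow> path_degenerate p V E"

text \<open>Shallow minors at depth r, represented canonically with the branch sets as vertices.\<close>
definition walk_within :: "'a set set \<Rightarrow> 'a set \<Rightarrow> 'a list \<Rightarrow> bool" where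
  "walk_within E X xs \<longleftrightarrow> xs \<noteq> [] \<and> set xs \<subseteq> X \<and>
     (\<forall>i. Suc i < length xs \<longrightarrow> {xs ! i, xs ! Suc i} \<in> E)"

definition radius_le :: "'a set set \<Rightarrow> 'a set \<Rightarrow> nat \<Rightarrow> bool" where
  "radius_le E X r \<longleftrightarrow> (\<exists>c\<in>X. \<forall>x\<in>X. \<exists>xs. walk_within E X xs \<and> hd xs = c \<and> last xs = x
                                          \<and> length xs \<le> r + 1)"

definition shallow_minor :: "nat \<Rightarrow> 'a set \<Rightarrow> 'a set set \<Rightarrow> 'a set set \<Rightarrow> 'a set set set \<Rightarrow> bool" where
  "shallow_minor r V E W F \<longleftrightarrow>
     (\<forall>X\<in>W. X \<noteq> {} \<and> X \<subseteq> V \<and> radius_le E X r) \<and>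
     (\<forall>X\<in>W. \<forall>Y\<in>W. X \<noteq> Y \<longrightarrow> X \<inter> Y = {}) \<and>
     (\<forall>f\<in>F. \<exists>X Y. X \<in> W \<and> Y \<in> W \<and> X \<noteq> Y \<and> f = {X, Y} \<and> (\<exists>x\<in>X. \<exists>y\<in>Y. {x, y} \<in> E))"

definition nabla :: "nat \<Rightarrow> 'a set \<Rightarrow> 'a set set \<Rightarrow> ereal" where
  "nabla r V E = Sup {ereal (real (card F) / real (card W)) | W F. shallow_minor r V E W F \<and> W \<noteq> {}}"

text \<open>sup over the class of nabla_r is 2^{o(r)}.\<close>
definition subexp_expansion :: "('a set \<times> 'a set set) set \<Rightarrow> bool" where
  "subexp_expansion C \<longleftrightarrow>
     (\<forall>\<epsilon>>0. \<exists>N. \<forall>r\<ge>N. (SUP G\<in>C. nabla r (fst G) (snd G)) \<le> ereal (2 powr (\<epsilon> * real r)))"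

end

theory Submission
  imports Defs
begin

(* An (r+1)-path degenerate graph has no cycle of length at most r: a reduction deletes either a
   vertex of degree at most 1, which lies on no cycle, or the inner vertices of an ear with at
   least r+1 edges, and every cycle through an inner vertex runs along the whole ear. So a cycle
   of G must see r colours, and a vertex of maximum degree sees Delta colours.

   Conversely, undoing the reductions one at a time extends an r-acyclic colouring with
   max Delta r colours. A re-inserted pendant edge gets a colour missing at its other end. A
   re-inserted ear gets a properly coloured sequence that avoids the colours already present at
   its two ends and uses at least r distinct colours; a new cycle contains the whole ear. *)

lemma graph_finite_edges:
  assumes "graph V E"
  shows "finite E"
proof (rule finite_subset)
  show "E \<subseteq> Pow V" using assms unfolding graph_def by auto
  show "finite (Pow V)" using assms unfolding graph_def by simp
qed

lemma graph_edgeE: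
  assumes "graph V E" "e \<in> E"
  obtains u v where "u \<noteq> v" "e = {u, v}" "u \<in> V" "v \<in> V"
  using assms unfolding graph_def by blast

lemma graph_del_vertices:
  assumes "graph V E"
  shows "graph (del_V V S) (del_E E S)"
proof -
  have "\<exists>u v. u \<noteq> v \<and> e = {u, v} \<and> u \<in> V - S \<and> v \<in> V - S" if e: "e \<in> E" "e \<inter> S = {}" for e
  proof -
    obtain u v where "u \<noteq> v" "e = {u, v}" "u \<in> V" "v \<in> V" using graph_edgeE[OF assms e(1)] .
    thus ?thesis using e(2) by blast
  qed
  moreover have "finite (V - S)" using assms unfolding graph_def by simp
  ultimately show ?thesis unfolding graph_def del_V_def del_E_def by simp
qed

lemma del_E_subset: "del_E E S \<subseteq> E"
  unfolding del_E_def by blast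

lemma degree_mono: "E' \<subseteq> E \<Longrightarrow> finite E \<Longrightarrow> degree E' v \<le> degree E v"
  unfolding degree_def by (rule card_mono) auto

lemma doubleton_eq_if_card_le_2:
  assumes "finite A" "card A \<le> 2" "x \<in> A" "y \<in> A" "x \<noteq> y"
  shows "A = {x, y}"
proof -
  have sub: "{x, y} \<subseteq> A" and "card {x, y} = 2" using assms by auto
  thus ?thesis using card_seteq[OF assms(1) sub] assms(2) by simp
qed

lemma exists_colour_not_in:
  assumes "finite A" "card A < k"
  obtains x where "x < k" "x \<notin> A"
proof -
  have "\<not> {..<k} \<subseteq> A"
  proof
    assume "{..<k} \<subseteq> A"
    from card_mono[OF assms(1) this] show False using assms(2) by simp
  qed
  thus ?thesis using that by auto
qed

lemma mod_succ_less: "i < n \<Longrightarrow> (i + 1) mod n < (n::nat)"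
  by (rule mod_less_divisor) linarith

lemma mod_succ_ne:
  fixes n m :: nat
  assumes n: "3 \<le> n" and m: "m < n"
  shows "(m + 1) mod n \<noteq> m" "(m + 2) mod n \<noteq> m"
proof -
  have "\<not> n dvd 1" "\<not> n dvd 2" using n by (auto dest: dvd_imp_le)
  thus "(m + 1) mod n \<noteq> m" "(m + 2) mod n \<noteq> m"
    using m mod_eq_dvd_iff_nat[of m "m + 1" n] mod_eq_dvd_iff_nat[of m "m + 2" n] by auto
qed

lemma cycle_edges_eq_image:
  "cycle_edges cs = (\<lambda>i. {cs ! i, cs ! ((i + 1) mod length cs)}) ` {..<length cs}"
  unfolding cycle_edges_def by auto

lemma finite_cycle_edges: "finite (cycle_edges cs)"
  unfolding cycle_edges_eq_image by simp

lemma card_cycle_edges_le: "card (cycle_edges cs) \<le> length cs"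
  unfolding cycle_edges_eq_image using card_image_le[OF finite_lessThan] by fastforce

lemma cycle_edges_subset: "is_cycle V E cs \<Longrightarrow> cycle_edges cs \<subseteq> E"
  unfolding is_cycle_def cycle_edges_def by auto

lemma cycle_edge_subset_vertices:
  assumes "is_cycle V E cs" "e \<in> cycle_edges cs"
  shows "e \<subseteq> set cs"
proof -
  obtain i where "i < length cs" "e = {cs ! i, cs ! ((i + 1) mod length cs)}"
    using assms(2) unfolding cycle_edges_def by blast
  moreover have "(i + 1) mod length cs < length cs" using \<open>i < length cs\<close> by (rule mod_succ_less)
  ultimately show ?thesis by auto
qed

lemma is_cycle_del:
  assumes "is_cycle V E cs" "set cs \<inter> S = {}"
  shows "is_cycle (del_V V S) (del_E E S) cs"
proof -
  have "{cs ! i, cs ! ((i + 1) mod length cs)} \<subseteq> set cs" if "i < length cs" for i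
    using that mod_succ_less[OF that] by simp
  hence "\<forall>i<length cs. {cs ! i, cs ! ((i + 1) mod length cs)} \<inter> S = {}" using assms(2) by blast
  thus ?thesis using assms(1,2) unfolding is_cycle_def del_V_def del_E_def by auto
qed

text \<open>The two cycle edges at a position i join it to its predecessor and to its successor; they
  differ because a cycle has length at least 3.\<close>
lemma cycle_vertex_two_edges:
  assumes c: "is_cycle V E cs" and w: "w \<in> set cs"
  obtains e1 e2 where "e1 \<noteq> e2" "e1 \<in> cycle_edges cs" "e2 \<in> cycle_edges cs" "w \<in> e1" "w \<in> e2"
proof -
  let ?n = "length cs"
  let ?succ = "\<lambda>i. (i + 1) mod ?n"
  have n: "3 \<le> ?n" and d: "distinct cs" using c unfolding is_cycle_def by auto
  obtain i where i: "i < ?n" "w = cs ! i" using w by (metis in_set_conv_nth)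
  define j where "j = (i + ?n - 1) mod ?n"
  have j: "j < ?n" unfolding j_def using n by (rule mod_less_divisor[OF less_le_trans, rotated]) simp
  have succ_j: "?succ j = i"
  proof -
    have "i + ?n - 1 + 1 = i + ?n" using n by linarith
    thus ?thesis unfolding j_def mod_add_left_eq using i(1) by simp
  qed
  have "?succ i \<noteq> j"
  proof
    assume "?succ i = j"
    have "(j + 2) mod ?n = (?succ j + 1) mod ?n" unfolding mod_add_left_eq by simp
    hence "(j + 2) mod ?n = j" using \<open>?succ i = j\<close> succ_j by simp
    thus False using mod_succ_ne(2)[OF n j] by simp
  qed
  moreover have "j \<noteq> i" using mod_succ_ne(1)[OF n j] succ_j by simp
  moreover have "?succ i \<noteq> i" using mod_succ_ne(1)[OF n i(1)] .
  moreover have "?succ i < ?n" using i(1) by (rule mod_succ_less)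
  ultimately have ne: "cs ! j \<noteq> cs ! ?succ i" "cs ! j \<noteq> cs ! i" "cs ! ?succ i \<noteq> cs ! i"
    using d i(1) j by (simp_all add: nth_eq_iff_index_eq)
  let ?e1 = "{cs ! j, cs ! i}" and ?e2 = "{cs ! i, cs ! ?succ i}"
  have "?e1 \<in> cycle_edges cs"
    unfolding cycle_edges_eq_image by (rule image_eqI[where x = j]) (use j succ_j in simp_all)
  moreover have "?e2 \<in> cycle_edges cs"
    unfolding cycle_edges_eq_image by (rule image_eqI[where x = i]) (use i(1) in simp_all)
  moreover have "?e1 \<noteq> ?e2" using ne by (auto simp: doubleton_eq_iff)
  ultimately show ?thesis using that[of ?e1 ?e2] unfolding i(2) by simp
qed

lemma cycle_vertex_degree_ge_2:
  assumes "finite E" "is_cycle V E cs" "w \<in> set cs"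
  shows "2 \<le> degree E w"
proof -
  obtain e1 e2 where e: "e1 \<noteq> e2" "e1 \<in> cycle_edges cs" "e2 \<in> cycle_edges cs" "w \<in> e1" "w \<in> e2"
    using cycle_vertex_two_edges[OF assms(2,3)] .
  hence "{e1, e2} \<subseteq> {e\<in>E. w \<in> e}" using cycle_edges_subset[OF assms(2)] by auto
  from card_mono[OF _ this] show ?thesis using assms(1) e(1) unfolding degree_def by simp
qed

lemma edges_at_degree_2_vertex_on_cycle:
  assumes "finite E" "is_cycle V E cs" "w \<in> set cs" "degree E w = 2"
  shows "{e\<in>E. w \<in> e} \<subseteq> cycle_edges cs"
proof -
  obtain e1 e2 where e: "e1 \<noteq> e2" "e1 \<in> cycle_edges cs" "e2 \<in> cycle_edges cs" "w \<in> e1" "w \<in> e2"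
    using cycle_vertex_two_edges[OF assms(2,3)] .
  moreover have "e1 \<in> E" "e2 \<in> E" using e cycle_edges_subset[OF assms(2)] by auto
  ultimately have "{e\<in>E. w \<in> e} = {e1, e2}"
    using doubleton_eq_if_card_le_2[of "{e\<in>E. w \<in> e}" e1 e2] assms(1,4) unfolding degree_def by simp
  thus ?thesis using e by auto
qed

definition third_colour :: "nat \<Rightarrow> nat \<Rightarrow> nat" where
  "third_colour x y = (if x \<noteq> 0 \<and> y \<noteq> 0 then 0 else if x \<noteq> 1 \<and> y \<noteq> 1 then 1 else 2)"

fun alternating_fill :: "nat \<Rightarrow> nat \<Rightarrow> nat \<Rightarrow> nat list" where
  "alternating_fill x 0 y = []"
| "alternating_fill x (Suc m) y = third_colour x y # alternating_fill (third_colour x y) m y"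

lemma third_colour_ne: "third_colour x y \<noteq> x" "third_colour x y \<noteq> y" "third_colour x y < 3"
  unfolding third_colour_def by auto

lemma length_alternating_fill: "length (alternating_fill x m y) = m"
  by (induction m arbitrary: x) auto

lemma set_alternating_fill: "set (alternating_fill x m y) \<subseteq> {..<3}"
  by (induction m arbitrary: x) (auto simp: third_colour_ne)

lemma successively_alternating_fill:
  "m = 0 \<longrightarrow> x \<noteq> y \<Longrightarrow> successively (\<noteq>) (x # alternating_fill x m y @ [y])"
proof (induction m arbitrary: x)
  case 0
  then show ?case by simp
next
  case (Suc m)
  have "successively (\<noteq>) (third_colour x y # alternating_fill (third_colour x y) m y @ [y])"
    using Suc.IH third_colour_ne by blast
  then show ?case using third_colour_ne(1)[of x y] by (simp add: eq_commute)
qed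

lemma successively_neq_Cons_distinct: "distinct ds \<Longrightarrow> c \<notin> set ds \<Longrightarrow> successively (\<noteq>) (c # ds)"
  by (induction ds arbitrary: c) (auto simp: successively_Cons)

lemma obtain_distinct_list_avoiding:
  assumes "B \<subseteq> {..<k}" "m + card B \<le> (k::nat)"
  obtains ds where "distinct ds" "length ds = m" "set ds \<subseteq> {..<k} - B"
proof -
  have "card ({..<k} - B) = k - card B"
    using assms(1) by (simp add: card_Diff_subset finite_subset)
  hence "m \<le> card ({..<k} - B)" using assms(2) by simp
  then obtain T where "T \<subseteq> {..<k} - B" "card T = m" "finite T"
    by (metis obtain_subset_with_card_n)
  thus ?thesis using that[of "sorted_list_of_set T"] by simp
qed

text \<open>A proper colouring of a path of L \<ge> r + 1 edges with prescribed end colours using at least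
  r colours: the two end colours, r - 2 or r - 1 further fresh colours, and a filling from
  {0, 1, 2} that avoids repeating colours on consecutive edges.\<close>
lemma proper_colour_sequence_exists:
  assumes r: "3 \<le> r" "r \<le> k" "r + 1 \<le> L" and ends: "c1 < k" "cL < k"
  obtains sq where "length sq = L" "sq ! 0 = c1" "sq ! (L - 1) = cL" "successively (\<noteq>) sq"
    "set sq \<subseteq> {..<k}" "r \<le> card (set sq)"
proof -
  define B where "B = {c1, cL}"
  have B: "B \<subseteq> {..<k}" "1 \<le> card B" "card B \<le> 2"
    unfolding B_def using ends by (auto simp: card_insert_if)
  obtain ds where ds: "distinct ds" "length ds = r - card B" "set ds \<subseteq> {..<k} - B"
    using obtain_distinct_list_avoiding[OF B(1), of "r - card B"] r B by auto
  define x where "x = last (c1 # ds)"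
  define m where "m = L - 2 - length ds"
  define sq where "sq = (c1 # ds) @ (alternating_fill x m cL @ [cL])"
  have len: "length sq = L" unfolding sq_def m_def using ds B r by (simp add: length_alternating_fill)
  have head: "successively (\<noteq>) (c1 # ds)"
    using ds(1,3) unfolding B_def by (intro successively_neq_Cons_distinct) auto
  have "m = 0 \<longrightarrow> x \<noteq> cL"
  proof (cases ds)
    case Nil
    hence "card B = r" using ds(2) B r by simp
    thus ?thesis using B r by simp
  next
    case (Cons a l)
    hence "x \<in> set ds" unfolding x_def by simp
    thus ?thesis using ds(3) unfolding B_def by auto
  qed
  hence tail: "successively (\<noteq>) (x # alternating_fill x m cL @ [cL])"
    by (rule successively_alternating_fill)
  have "successively (\<noteq>) sq"
  proof -
    have "successively (\<noteq>) (alternating_fill x m cL @ [cL])"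
      using tail by (simp add: successively_Cons)
    moreover have "x \<noteq> hd (alternating_fill x m cL @ [cL])"
      using tail by (cases "alternating_fill x m cL @ [cL]") auto
    ultimately show ?thesis
      unfolding sq_def using head by (subst successively_append_iff) (simp add: x_def)
  qed
  moreover have "set sq \<subseteq> {..<k}"
    unfolding sq_def using ends ds(3) set_alternating_fill[of x m cL] r by auto
  moreover have "r \<le> card (set sq)"
  proof -
    have "B \<union> set ds \<subseteq> set sq" unfolding sq_def B_def by auto
    moreover have "card (B \<union> set ds) = r"
      using ds B r by (subst card_Un_disjoint) (auto simp: distinct_card B_def)
    ultimately show ?thesis by (metis card_mono List.finite_set)
  qed
  moreover have "sq ! 0 = c1" unfolding sq_def by simp
  moreover have "sq ! (L - 1) = cL"
    using len r last_conv_nth[of sq] unfolding sq_def by (simp add: nth_append)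
  ultimately show ?thesis using that len by blast
qed

lemma p_reductionE:
  assumes "p_reduction p V E V' E'"
  obtains (low_degree) v where "v \<in> V" "degree E v \<le> 1" "V' = del_V V {v}" "E' = del_E E {v}"
  | (ear) xs where "strict_ear V E xs" "p \<le> length xs - 1"
      "V' = del_V V (set (butlast (tl xs)))" "E' = del_E E (set (butlast (tl xs)))"
  using assms unfolding p_reduction_def by (auto simp: le_Suc_eq)

lemma proper_edge_col_extend:
  assumes c: "proper_edge_col E' c" and agree: "\<forall>e\<in>E'. c' e = c e"
    and new: "\<And>e f. e \<in> E - E' \<Longrightarrow> f \<in> E \<Longrightarrow> e \<noteq> f \<Longrightarrow> e \<inter> f \<noteq> {} \<Longrightarrow> c' e \<noteq> c' f"
  shows "proper_edge_col E c'"
  unfolding proper_edge_col_def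
proof (intro ballI impI)
  fix e f assume ef: "e \<in> E" "f \<in> E" "e \<noteq> f \<and> e \<inter> f \<noteq> {}"
  show "c' e \<noteq> c' f"
  proof (cases "e \<in> E' \<and> f \<in> E'")
    case True
    thus ?thesis using c agree ef unfolding proper_edge_col_def by auto
  next
    case False
    show ?thesis
    proof (cases "e \<in> E'")
      case True
      hence "f \<in> E - E'" using False ef by auto
      moreover have "f \<noteq> e" "f \<inter> e \<noteq> {}" using ef by (auto simp: Int_commute)
      ultimately have "c' f \<noteq> c' e" using new ef(1) by blast
      thus ?thesis by simp
    next
      case False
      thus ?thesis using new[of e f] ef by auto
    qed
  qed
qed

lemma r_acyclic_col_extend:
  assumes c: "r_acyclic_col r (del_V V S) (del_E E S) c"
    and agree: "\<forall>e\<in>del_E E S. c' e = c e" and proper: "proper_edge_col E c'"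
    and hit: "\<And>cs. is_cycle V E cs \<Longrightarrow> set cs \<inter> S \<noteq> {} \<Longrightarrow> r \<le> card (c' ` cycle_edges cs)"
  shows "r_acyclic_col r V E c'"
  unfolding r_acyclic_col_def
proof (intro conjI proper allI impI)
  fix cs assume cs: "is_cycle V E cs"
  show "min (length cs) r \<le> card (c' ` cycle_edges cs)"
  proof (cases "set cs \<inter> S = {}")
    case True
    hence cs': "is_cycle (del_V V S) (del_E E S) cs" by (rule is_cycle_del[OF cs])
    have "c' ` cycle_edges cs = c ` cycle_edges cs"
      using cycle_edges_subset[OF cs'] agree by (intro image_cong) auto
    thus ?thesis using c cs' unfolding r_acyclic_col_def by simp
  next
    case False
    thus ?thesis using hit[OF cs] by simp
  qed
qed

lemma degree_del_E_less:
  assumes "finite E" "e \<in> E" "w \<in> e" "e \<inter> S \<noteq> {}"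
  shows "degree (del_E E S) w < degree E w"
proof -
  have "{f\<in>del_E E S. w \<in> f} \<subset> {f\<in>E. w \<in> f}" using assms(2-4) unfolding del_E_def by auto
  thus ?thesis unfolding degree_def using assms(1) by (simp add: psubset_card_mono)
qed

lemma exists_colour_missing_at:
  assumes "finite E" "E' \<subseteq> E" "degree E' w < k"
  obtains x where "x < k" "x \<notin> c ` {f\<in>E'. w \<in> f}"
proof -
  have fin: "finite {f\<in>E'. w \<in> f}" using assms(1,2) by (simp add: finite_subset)
  have "card (c ` {f\<in>E'. w \<in> f}) < k"
    using card_image_le[OF fin, of c] assms(3) unfolding degree_def by linarith
  from exists_colour_not_in[OF finite_imageI[OF fin] this that] show ?thesis .
qed

lemma low_degree_vertex_not_on_cycle:
  assumes "finite E" "degree E v \<le> 1" "is_cycle V E cs"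
  shows "v \<notin> set cs"
  using cycle_vertex_degree_ge_2[OF assms(1,3)] assms(2) by fastforce

lemma extend_col_pendant_vertex:
  assumes G: "graph V E" and e0: "{e\<in>E. v \<in> e} = {e0}" and deg: "\<forall>w\<in>V. degree E w \<le> k"
    and c: "r_acyclic_col r (del_V V {v}) (del_E E {v}) c" "c ` del_E E {v} \<subseteq> {..<k}"
  obtains c' where "r_acyclic_col r V E c'" "c' ` E \<subseteq> {..<k}"
proof -
  let ?E' = "del_E E {v}"
  have finE: "finite E" using graph_finite_edges[OF G] .
  have "e0 \<in> E" "v \<in> e0" using e0 by auto
  obtain x y where xy: "x \<noteq> y" "e0 = {x, y}" "x \<in> V" "y \<in> V"
    using graph_edgeE[OF G \<open>e0 \<in> E\<close>] .
  have "\<exists>u. e0 = {v, u} \<and> u \<in> V" using xy \<open>v \<in> e0\<close> by auto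
  then obtain u where u: "e0 = {v, u}" "u \<in> V" by blast
  have E': "?E' = E - {e0}" using e0 unfolding del_E_def by auto
  have "degree ?E' u < degree E u"
    by (rule degree_del_E_less[OF finE \<open>e0 \<in> E\<close>]) (use u(1) in auto)
  moreover have "degree E u \<le> k" using deg u(2) by blast
  ultimately have "degree ?E' u < k" by linarith
  then obtain c0 where c0: "c0 < k" "c0 \<notin> c ` {f\<in>?E'. u \<in> f}"
    by (rule exists_colour_missing_at[OF finE del_E_subset])
  define c' where "c' = c(e0 := c0)"
  have agree: "\<forall>e\<in>?E'. c' e = c e" unfolding c'_def using E' by auto
  have proper: "proper_edge_col ?E' c" using c(1) unfolding r_acyclic_col_def by blast
  have "proper_edge_col E c'"
  proof (rule proper_edge_col_extend[OF proper agree])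
    fix e f assume "e \<in> E - ?E'" "f \<in> E" "e \<noteq> f" "e \<inter> f \<noteq> {}"
    hence "e = e0" "f \<in> ?E'" using E' by auto
    hence "u \<in> f" using \<open>e \<inter> f \<noteq> {}\<close> u(1) unfolding del_E_def by auto
    thus "c' e \<noteq> c' f" using c0 agree \<open>e = e0\<close> \<open>f \<in> ?E'\<close> unfolding c'_def by auto
  qed
  moreover have "degree E v \<le> 1" using e0 unfolding degree_def by simp
  ultimately have "r_acyclic_col r V E c'"
    using r_acyclic_col_extend[OF c(1) agree] low_degree_vertex_not_on_cycle[OF finE] by blast
  moreover have "c' ` E \<subseteq> {..<k}" using c(2) c0(1) E' unfolding c'_def by auto
  ultimately show ?thesis by (rule that)
qed

lemma extend_col_low_degree_vertex:
  assumes G: "graph V E" and v: "degree E v \<le> 1" and deg: "\<forall>w\<in>V. degree E w \<le> k"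
    and c: "r_acyclic_col r (del_V V {v}) (del_E E {v}) c" "c ` del_E E {v} \<subseteq> {..<k}"
  obtains c' where "r_acyclic_col r V E c'" "c' ` E \<subseteq> {..<k}"
proof (cases "degree E v = 0")
  case True
  have finE: "finite E" using graph_finite_edges[OF G] .
  hence "{e\<in>E. v \<in> e} = {}" using True unfolding degree_def by simp
  hence E: "del_E E {v} = E" unfolding del_E_def by auto
  have "proper_edge_col E c" using c(1) unfolding E r_acyclic_col_def by blast
  hence "r_acyclic_col r V E c"
    using r_acyclic_col_extend[OF c(1)] low_degree_vertex_not_on_cycle[OF finE v] E by auto
  thus ?thesis using that c(2) E by auto
next
  case False
  hence "card {e\<in>E. v \<in> e} = 1" using v unfolding degree_def by simp
  then obtain e0 where "{e\<in>E. v \<in> e} = {e0}" using card_1_singletonE by blast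
  from extend_col_pendant_vertex[OF G this deg c] show ?thesis using that .
qed

locale long_strict_ear =
  fixes V :: "'a set" and E :: "'a set set" and xs :: "'a list"
  assumes graph: "graph V E" and is_strict_ear: "strict_ear V E xs" and long: "2 \<le> length xs - 1"
begin

definition len :: nat where "len = length xs - 1"

definition ear_edge :: "nat \<Rightarrow> 'a set" where "ear_edge i = {xs ! i, xs ! Suc i}"

definition inner :: "'a set" where "inner = set (butlast (tl xs))"

definition ear_edges :: "'a set set" where "ear_edges = ear_edge ` {..<len}"

lemma finite_E: "finite E"
  using graph_finite_edges[OF graph] .

lemma length_xs: "length xs = Suc len" and len_ge_2: "2 \<le> len"
  using long unfolding len_def by auto

lemma nth_in_V: "i \<le> len \<Longrightarrow> xs ! i \<in> V"
  using is_strict_ear length_xs unfolding strict_ear_def is_path_def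
  by (auto simp: less_Suc_eq_le[symmetric])

lemma ear_edge_in_E: "i < len \<Longrightarrow> ear_edge i \<in> E"
  using is_strict_ear length_xs unfolding strict_ear_def is_path_def ear_edge_def by auto

lemma nth_eq_iff: "i \<le> len \<Longrightarrow> j \<le> len \<Longrightarrow> xs ! i = xs ! j \<longleftrightarrow> i = j"
  using is_strict_ear length_xs unfolding strict_ear_def is_path_def by (simp add: nth_eq_iff_index_eq)

lemma ear_edge_inj: "i < len \<Longrightarrow> j < len \<Longrightarrow> ear_edge i = ear_edge j \<Longrightarrow> i = j"
  unfolding ear_edge_def by (auto simp: doubleton_eq_iff nth_eq_iff)

lemma inj_on_ear_edge: "inj_on ear_edge {..<len}"
  by (rule inj_onI) (auto intro: ear_edge_inj)

lemma card_ear_edges: "card ear_edges = len"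
  unfolding ear_edges_def by (simp add: card_image inj_on_ear_edge)

lemma nth_mem_ear_edge: "i < len \<Longrightarrow> j \<le> len \<Longrightarrow> xs ! j \<in> ear_edge i \<longleftrightarrow> j = i \<or> j = Suc i"
  unfolding ear_edge_def using nth_eq_iff by auto

lemma inner_iff: "w \<in> inner \<longleftrightarrow> (\<exists>j. 0 < j \<and> j < len \<and> w = xs ! j)"
proof -
  have l: "length (butlast (tl xs)) = len - 1" using length_xs by simp
  have n: "j < len - 1 \<Longrightarrow> butlast (tl xs) ! j = xs ! Suc j" for j
    using length_xs by (simp add: nth_butlast nth_tl)
  show ?thesis unfolding inner_def in_set_conv_nth l
  proof
    assume "\<exists>k<len - 1. butlast (tl xs) ! k = w"
    then obtain k where "k < len - 1" "butlast (tl xs) ! k = w" by blast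
    thus "\<exists>j. 0 < j \<and> j < len \<and> w = xs ! j" using n by (intro exI[of _ "Suc k"]) auto
  next
    assume "\<exists>j. 0 < j \<and> j < len \<and> w = xs ! j"
    then obtain j where "0 < j" "j < len" "w = xs ! j" by blast
    thus "\<exists>k<len - 1. butlast (tl xs) ! k = w" using n[of "j - 1"] by (intro exI[of _ "j - 1"]) auto
  qed
qed

lemma degree_inner:
  assumes "0 < j" "j < len"
  shows "degree E (xs ! j) = 2"
proof -
  have "xs ! j \<in> inner" using inner_iff assms by blast
  thus ?thesis using is_strict_ear unfolding strict_ear_def inner_def by blast
qed

lemma edges_at_inner:
  assumes j: "0 < j" "j < len"
  shows "{e\<in>E. xs ! j \<in> e} = {ear_edge (j - 1), ear_edge j}"
proof -
  have a: "ear_edge (j - 1) \<in> {e\<in>E. xs ! j \<in> e}" using j ear_edge_in_E nth_mem_ear_edge by auto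
  have b: "ear_edge j \<in> {e\<in>E. xs ! j \<in> e}" using j ear_edge_in_E nth_mem_ear_edge by auto
  have "j - 1 < len" "j - 1 \<noteq> j" using j by auto
  hence "ear_edge (j - 1) \<noteq> ear_edge j" using j(2) ear_edge_inj by blast
  thus ?thesis using doubleton_eq_if_card_le_2[OF _ _ a b] finite_E degree_inner[OF j]
    unfolding degree_def by simp
qed

lemma ear_edge_meets_inner: "i < len \<Longrightarrow> ear_edge i \<inter> inner \<noteq> {}"
proof -
  assume "i < len"
  hence "xs ! (if i = 0 then 1 else i) \<in> inner" using inner_iff len_ge_2 by auto
  thus ?thesis unfolding ear_edge_def by (auto split: if_splits)
qed

lemma E_eq_Un: "E = del_E E inner \<union> ear_edges" and ear_edges_disjoint: "ear_edges \<inter> del_E E inner = {}"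
proof -
  have "e \<in> ear_edges" if e: "e \<in> E" "e \<inter> inner \<noteq> {}" for e
  proof -
    obtain w where "w \<in> e" "w \<in> inner" using e by blast
    then obtain j where j: "0 < j" "j < len" "w = xs ! j" using inner_iff by blast
    hence "e \<in> {ear_edge (j - 1), ear_edge j}" using edges_at_inner \<open>w \<in> e\<close> e(1) by blast
    thus ?thesis unfolding ear_edges_def using j by auto
  qed
  moreover have "ear_edge i \<inter> inner \<noteq> {}" if "i < len" for i
    using ear_edge_meets_inner that .
  moreover have "ear_edges \<subseteq> E" unfolding ear_edges_def using ear_edge_in_E by auto
  ultimately show "E = del_E E inner \<union> ear_edges" "ear_edges \<inter> del_E E inner = {}"
    unfolding del_E_def ear_edges_def by blast+
qed

lemma ear_edge_meets_remaining_edge: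
  assumes i: "i < len" and w: "w \<in> ear_edge i" "w \<in> f" and f: "f \<in> del_E E inner"
  shows "(w = xs ! 0 \<and> i = 0) \<or> (w = xs ! len \<and> i = len - 1)"
proof -
  have "w \<notin> inner" using w(2) f unfolding del_E_def by auto
  moreover have "w = xs ! i \<or> w = xs ! Suc i" using w(1) unfolding ear_edge_def by auto
  ultimately show ?thesis using i inner_iff
    by (metis Suc_lessI bot_nat_0.not_eq_extremum diff_Suc_1 zero_less_Suc)
qed

lemma degree_ends_decrease:
  "degree (del_E E inner) (xs ! 0) < degree E (xs ! 0)"
  "degree (del_E E inner) (xs ! len) < degree E (xs ! len)"
proof -
  have "0 < len" "len - 1 < len" using len_ge_2 by auto
  moreover have "xs ! 0 \<in> ear_edge 0" "xs ! len \<in> ear_edge (len - 1)"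
    unfolding ear_edge_def using len_ge_2 by auto
  ultimately show "degree (del_E E inner) (xs ! 0) < degree E (xs ! 0)"
    "degree (del_E E inner) (xs ! len) < degree E (xs ! len)"
    using degree_del_E_less[OF finite_E ear_edge_in_E _ ear_edge_meets_inner] by blast+
qed

text \<open>Inner vertices have degree 2, so a cycle through one of them must run along the whole ear.\<close>
lemma ear_edges_subset_cycle:
  assumes c: "is_cycle V E cs" and hit: "set cs \<inter> inner \<noteq> {}"
  shows "ear_edges \<subseteq> cycle_edges cs"
proof -
  have on_cycle_iff: "ear_edge (j - 1) \<in> cycle_edges cs \<longleftrightarrow> xs ! j \<in> set cs"
    "ear_edge j \<in> cycle_edges cs \<longleftrightarrow> xs ! j \<in> set cs" if j: "0 < j" "j < len" for j
  proof -
    have mem: "xs ! j \<in> ear_edge (j - 1)" "xs ! j \<in> ear_edge j" using j nth_mem_ear_edge by auto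
    have on_cycle: "ear_edge (j - 1) \<in> cycle_edges cs" "ear_edge j \<in> cycle_edges cs"
      if "xs ! j \<in> set cs"
      using edges_at_degree_2_vertex_on_cycle[OF finite_E c that degree_inner[OF j]]
      unfolding edges_at_inner[OF j] by simp_all
    show "ear_edge (j - 1) \<in> cycle_edges cs \<longleftrightarrow> xs ! j \<in> set cs"
      using mem(1) on_cycle(1) cycle_edge_subset_vertices[OF c, of "ear_edge (j - 1)"] by auto
    show "ear_edge j \<in> cycle_edges cs \<longleftrightarrow> xs ! j \<in> set cs"
      using mem(2) on_cycle(2) cycle_edge_subset_vertices[OF c, of "ear_edge j"] by auto
  qed
  have all_or_none: "ear_edge i \<in> cycle_edges cs \<longleftrightarrow> ear_edge 0 \<in> cycle_edges cs" if "i < len" for i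
    using that
  proof (induction i)
    case (Suc i)
    thus ?case using on_cycle_iff[of "Suc i"] by simp
  qed simp
  obtain w where w: "w \<in> set cs" "w \<in> inner" using hit by blast
  then obtain j where "0 < j" "j < len" "w = xs ! j" using inner_iff by blast
  hence j: "0 < j" "j < len" "xs ! j \<in> set cs" using w(1) by simp_all
  hence "ear_edge 0 \<in> cycle_edges cs" using on_cycle_iff(2)[OF j(1,2)] all_or_none[OF j(2)] by simp
  hence "ear_edge i \<in> cycle_edges cs" if "i < len" for i using all_or_none[OF that] by simp
  thus ?thesis unfolding ear_edges_def by auto
qed

lemma ear_edges_adjacent:
  assumes "i < len" "j < len" "i \<noteq> j" "ear_edge i \<inter> ear_edge j \<noteq> {}"
  shows "i = Suc j \<or> j = Suc i"
proof -
  obtain w where w: "w \<in> ear_edge i" "w \<in> ear_edge j" using assms(4) by blast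
  hence "w = xs ! i \<or> w = xs ! Suc i" unfolding ear_edge_def by blast
  thus ?thesis
    using w(2) assms(1-3) nth_mem_ear_edge[of j i] nth_mem_ear_edge[of j "Suc i"] by auto
qed

definition ear_recolour :: "nat list \<Rightarrow> ('a set \<Rightarrow> nat) \<Rightarrow> 'a set \<Rightarrow> nat" where
  "ear_recolour sq c e = (if e \<in> ear_edges then sq ! the_inv_into {..<len} ear_edge e else c e)"

lemma ear_recolour_ear_edge: "i < len \<Longrightarrow> ear_recolour sq c (ear_edge i) = sq ! i"
  unfolding ear_recolour_def ear_edges_def using the_inv_into_f_f[OF inj_on_ear_edge] by simp

lemma ear_recolour_remaining: "e \<in> del_E E inner \<Longrightarrow> ear_recolour sq c e = c e"
  unfolding ear_recolour_def using ear_edges_disjoint by auto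

lemma image_ear_recolour_ear_edges:
  assumes "length sq = len"
  shows "ear_recolour sq c ` ear_edges = set sq"
proof -
  have "ear_recolour sq c ` ear_edges = (\<lambda>i. sq ! i) ` {..<len}"
    unfolding ear_edges_def image_image using ear_recolour_ear_edge by simp
  also have "\<dots> = set sq" using assms by (auto simp: in_set_conv_nth)
  finally show ?thesis .
qed

lemma proper_ear_recolour:
  assumes c: "proper_edge_col (del_E E inner) c" and sq: "length sq = len" "successively (\<noteq>) sq"
    and first: "sq ! 0 \<notin> c ` {f\<in>del_E E inner. xs ! 0 \<in> f}"
    and last: "sq ! (len - 1) \<notin> c ` {f\<in>del_E E inner. xs ! len \<in> f}"
  shows "proper_edge_col E (ear_recolour sq c)"
proof (rule proper_edge_col_extend[OF c])
  show "\<forall>e\<in>del_E E inner. ear_recolour sq c e = c e" using ear_recolour_remaining by blast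
  fix e f assume e: "e \<in> E - del_E E inner" and f: "f \<in> E" "e \<noteq> f" "e \<inter> f \<noteq> {}"
  have "e \<in> ear_edges" using e E_eq_Un by blast
  then obtain i where i: "i < len" "e = ear_edge i" unfolding ear_edges_def by blast
  show "ear_recolour sq c e \<noteq> ear_recolour sq c f"
  proof (cases "f \<in> ear_edges")
    case True
    then obtain j where j: "j < len" "f = ear_edge j" unfolding ear_edges_def by blast
    hence "i = Suc j \<or> j = Suc i" using ear_edges_adjacent i f(2,3) by blast
    hence "sq ! i \<noteq> sq ! j"
      using successively_nth[OF sq(2), of i] successively_nth[OF sq(2), of j] sq(1) i(1) j(1) by auto
    thus ?thesis using i j ear_recolour_ear_edge by simp
  next
    case False
    hence f': "f \<in> del_E E inner" using f(1) E_eq_Un by blast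
    obtain w where w: "w \<in> ear_edge i" "w \<in> f" using f(3) i(2) by blast
    have "c f \<in> c ` {f\<in>del_E E inner. w \<in> f}" using f' w(2) by blast
    thus ?thesis using ear_edge_meets_remaining_edge[OF i(1) w f'] first last i f'
      by (auto simp: ear_recolour_ear_edge ear_recolour_remaining)
  qed
qed

lemma extend_col_across_ear:
  assumes r: "3 \<le> r" "r \<le> k" "r + 1 \<le> len" and deg: "\<forall>w\<in>V. degree E w \<le> k"
    and c: "r_acyclic_col r (del_V V inner) (del_E E inner) c" "c ` del_E E inner \<subseteq> {..<k}"
  obtains c' where "r_acyclic_col r V E c'" "c' ` E \<subseteq> {..<k}"
proof -
  let ?E' = "del_E E inner"
  have "degree E (xs ! 0) \<le> k" "degree E (xs ! len) \<le> k" using deg nth_in_V len_ge_2 by auto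
  hence "degree ?E' (xs ! 0) < k" "degree ?E' (xs ! len) < k"
    using degree_ends_decrease by linarith+
  obtain c1 where c1: "c1 < k" "c1 \<notin> c ` {f\<in>?E'. xs ! 0 \<in> f}"
    by (rule exists_colour_missing_at[OF finite_E del_E_subset \<open>degree ?E' (xs ! 0) < k\<close>])
  obtain cL where cL: "cL < k" "cL \<notin> c ` {f\<in>?E'. xs ! len \<in> f}"
    by (rule exists_colour_missing_at[OF finite_E del_E_subset \<open>degree ?E' (xs ! len) < k\<close>])
  obtain sq where sq: "length sq = len" "sq ! 0 = c1" "sq ! (len - 1) = cL" "successively (\<noteq>) sq"
    "set sq \<subseteq> {..<k}" "r \<le> card (set sq)"
    using proper_colour_sequence_exists[OF r c1(1) cL(1)] .
  let ?c' = "ear_recolour sq c"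
  have proper: "proper_edge_col ?E' c" using c(1) unfolding r_acyclic_col_def by blast
  have "proper_edge_col E ?c'"
    using proper_ear_recolour[OF proper sq(1,4)] c1(2) cL(2) sq(2,3) by simp
  moreover have "r \<le> card (?c' ` cycle_edges cs)"
    if "is_cycle V E cs" "set cs \<inter> inner \<noteq> {}" for cs
  proof -
    have "set sq \<subseteq> ?c' ` cycle_edges cs"
      using ear_edges_subset_cycle[OF that] image_ear_recolour_ear_edges[OF sq(1)] by blast
    thus ?thesis using sq(6) card_mono[OF finite_imageI[OF finite_cycle_edges]] by (meson le_trans)
  qed
  ultimately have "r_acyclic_col r V E ?c'"
    using r_acyclic_col_extend[OF c(1)] ear_recolour_remaining by blast
  moreover have "?c' ` E \<subseteq> {..<k}"
  proof -
    have "?c' ` E = ?c' ` ?E' \<union> ?c' ` ear_edges" by (subst E_eq_Un) (rule image_Un)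
    also have "?c' ` ?E' = c ` ?E'" by (rule image_cong) (simp_all add: ear_recolour_remaining)
    finally show ?thesis using c(2) sq(5) image_ear_recolour_ear_edges[OF sq(1)] by simp
  qed
  ultimately show ?thesis by (rule that)
qed

end

lemma long_strict_earI:
  assumes "graph V E" "strict_ear V E xs" "p \<le> length xs - 1" "2 \<le> p"
  shows "long_strict_ear V E xs"
  using assms by unfold_locales auto

lemma path_degenerate_cycle_length_ge:
  assumes "path_degenerate p V E" "graph V E" "2 \<le> p" "is_cycle V E cs"
  shows "p \<le> length cs"
  using assms
proof (induction arbitrary: cs rule: path_degenerate.induct)
  case empty
  then show ?case unfolding is_cycle_def by auto
next
  case (step V E V' E')
  have finE: "finite E" using graph_finite_edges[OF step.prems(1)] .
  have IH: "p \<le> length cs" if "V' = del_V V S" "E' = del_E E S" "set cs \<inter> S = {}" for S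
    using step.IH graph_del_vertices[OF step.prems(1)] is_cycle_del[OF step.prems(3) that(3)]
      step.prems(2) that(1,2) by blast
  from step.hyps(1) show ?case
  proof (cases rule: p_reductionE)
    case (low_degree v)
    have "v \<notin> set cs" using low_degree_vertex_not_on_cycle[OF finE low_degree(2) step.prems(3)] .
    thus ?thesis using IH low_degree(3,4) by blast
  next
    case (ear xs)
    interpret long_strict_ear V E xs
      using long_strict_earI step.prems(1,2) ear(1,2) by blast
    show ?thesis
    proof (cases "set cs \<inter> inner = {}")
      case True
      thus ?thesis using IH ear(3,4) unfolding inner_def by blast
    next
      case False
      hence "len \<le> card (cycle_edges cs)"
        using ear_edges_subset_cycle[OF step.prems(3)] card_mono[OF finite_cycle_edges] card_ear_edges
        by metis
      thus ?thesis using ear(2) card_cycle_edges_le[of cs] unfolding len_def by linarith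
    qed
  qed
qed

lemma path_degenerate_r_acyclic_col:
  assumes "path_degenerate (Suc r) V E" "graph V E" "3 \<le> r" "r \<le> k" "\<forall>v\<in>V. degree E v \<le> k"
  shows "\<exists>c. r_acyclic_col r V E c \<and> c ` E \<subseteq> {..<k}"
  using assms
proof (induction rule: path_degenerate.induct)
  case empty
  have "r_acyclic_col r {} {} (\<lambda>_. 0)"
    unfolding r_acyclic_col_def proper_edge_col_def is_cycle_def by auto
  thus ?case by blast
next
  case (step V E V' E')
  have deg: "\<forall>v\<in>V. degree E v \<le> k" using step.prems by blast
  have IH: "\<exists>c. r_acyclic_col r V' E' c \<and> c ` E' \<subseteq> {..<k}"
    if "V' = del_V V S" "E' = del_E E S" for S
  proof (rule step.IH)
    show "graph V' E'" using graph_del_vertices[OF step.prems(1)] that by simp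
    show "\<forall>v\<in>V'. degree E' v \<le> k"
      using deg degree_mono[OF del_E_subset graph_finite_edges[OF step.prems(1)]] that
      unfolding del_V_def by (meson DiffD1 le_trans)
  qed (use step.prems in auto)
  from step.hyps(1) show ?case
  proof (cases rule: p_reductionE)
    case (low_degree v)
    then obtain c where "r_acyclic_col r V' E' c" "c ` E' \<subseteq> {..<k}" using IH by blast
    thus ?thesis
      using extend_col_low_degree_vertex[OF step.prems(1) low_degree(2) deg] low_degree(3,4) by metis
  next
    case (ear xs)
    interpret long_strict_ear V E xs
      using long_strict_earI[OF step.prems(1) ear(1,2)] step.prems(2) by simp
    obtain c where "r_acyclic_col r V' E' c" "c ` E' \<subseteq> {..<k}"
      using IH ear(3,4) unfolding inner_def by blast
    thus ?thesis
      using extend_col_across_ear[OF step.prems(2,3) _ deg] ear(2-4) unfolding len_def inner_def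
      by (metis Suc_eq_plus1)
  qed
qed

lemma proper_edge_col_degree_le:
  assumes "proper_edge_col E c" "c ` E \<subseteq> {..<k}"
  shows "degree E v \<le> k"
proof -
  have "inj_on c {e\<in>E. v \<in> e}"
    using assms(1) unfolding proper_edge_col_def by (intro inj_onI) blast
  from card_inj_on_le[OF this _ finite_lessThan] show ?thesis
    using assms(2) unfolding degree_def by auto
qed

lemma r_acyclic_col_long_cycle_r_le:
  assumes "r_acyclic_col r V E c" "c ` E \<subseteq> {..<k}" "is_cycle V E cs" "r \<le> length cs"
  shows "r \<le> k"
proof -
  have "r \<le> card (c ` cycle_edges cs)" using assms(1,3,4) unfolding r_acyclic_col_def by fastforce
  also have "\<dots> \<le> card {..<k}"
    using assms(2) cycle_edges_subset[OF assms(3)] by (intro card_mono) auto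
  finally show ?thesis by simp
qed

lemma acyc_index_eqI:
  assumes "\<exists>c. r_acyclic_col r V E c \<and> c ` E \<subseteq> {..<m}"
    and "\<And>c k. r_acyclic_col r V E c \<Longrightarrow> c ` E \<subseteq> {..<k} \<Longrightarrow> m \<le> k"
  shows "acyc_index r V E = m"
  unfolding acyc_index_def using assms by (intro Least_equality) blast+

lemma degree_le_max_degree: "graph V E \<Longrightarrow> v \<in> V \<Longrightarrow> degree E v \<le> max_degree V E"
  unfolding max_degree_def graph_def by simp

lemma max_degree_attained:
  assumes "graph V E" "V \<noteq> {}"
  obtains v where "v \<in> V" "degree E v = max_degree V E"
proof -
  have "max_degree V E \<in> degree E ` V"
    unfolding max_degree_def using assms unfolding graph_def by (intro Max_in) auto
  thus ?thesis using that by auto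
qed

theorem mainTheorem15:
  fixes C :: "('a set \<times> 'a set set) set" and r :: nat and g :: int
    and V :: "'a set" and E :: "'a set set"
  assumes "r \<ge> 3"
    and "\<forall>G\<in>C. graph (fst G) (snd G)"
    and "subexp_expansion C"
    and "\<forall>G\<in>C. girth_ge (fst G) (snd G) g \<longrightarrow> path_degenerate (r + 1) (fst G) (snd G)"
    and "(V, E) \<in> C"
    and "max_degree V E \<ge> 3"
    and "girth_ge V E g"
    and "\<not> forest V E"
  shows "acyc_index r V E = max (max_degree V E) r"
proof (rule acyc_index_eqI)
  have G: "graph V E" using assms(2,5) by fastforce
  have pd: "path_degenerate (Suc r) V E" using assms(4,5,7) by fastforce
  obtain cs where cs: "is_cycle V E cs" using assms(8) unfolding forest_def by blast
  have "r + 1 \<le> length cs" using path_degenerate_cycle_length_ge[OF _ G _ cs] pd assms(1) by simp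
  have "V \<noteq> {}" using cs unfolding is_cycle_def by auto
  then obtain v where v: "v \<in> V" "degree E v = max_degree V E" using max_degree_attained[OF G] by blast
  show "\<exists>c. r_acyclic_col r V E c \<and> c ` E \<subseteq> {..<max (max_degree V E) r}"
    by (rule path_degenerate_r_acyclic_col[OF pd G assms(1)])
      (auto intro: le_trans[OF degree_le_max_degree[OF G]])
  fix c k assume c: "r_acyclic_col r V E c" "c ` E \<subseteq> {..<k}"
  have "max_degree V E \<le> k"
    using proper_edge_col_degree_le c v(2) unfolding r_acyclic_col_def by metis
  moreover have "r \<le> k" using r_acyclic_col_long_cycle_r_le[OF c cs] \<open>r + 1 \<le> length cs\<close> by simp
  ultimately show "max (max_degree V E) r \<le> k" by simp
qed

end
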